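(* Let $\mathbf{H}_d,\mathbf{f}_a,\mathbf{f}_d,\mathbf{g}_a,\mathbf{g}_d,\mathbf{R}_{xx},\sigma^2$ be as in the rate maximization problem, and let $\mathcal{D}=\{\operatorname{diag}(e^{j\phi_1},\dots,e^{j\phi_M}):\phi_m\in\mathbb{R}\}$. Then an optimal solution of $$\max_{\boldsymbol{\Theta}\in\mathcal{D}}\log\det\Big(\mathbf{I}+\tfrac{1}{\sigma^2}\mathbf{H}(\boldsymbol{\Theta})\mathbf{R}_{xx}\mathbf{H}(\boldsymbol{\Theta})^H\Big)$$ is $\boldsymbol{\Theta}=e^{j\theta_{opt}}\operatorname{diag}(e^{j\tilde\theta_1},\dots,e^{j\tilde\theta_M})$ with $\tilde\theta_m=-\angle\big(\mathbf{f}_d(m)^*\mathbf{g}_a(m)\big)$ for $m=1,\dots,M$ (arbitrary if the product is zero) and $\theta_{opt}=-\angle\Big(\mathbf{g}_d^H\mathbf{R}_{xx}\mathbf{H}_d^H\big(\mathbf{I}+\tfrac{1}{\sigma^2}\mathbf{H}_d\mathbf{R}_{xx}\mathbf{H}_d^H\big)^{-1}\mathbf{f}_a\Big)$; the corresponding maximal value of $|\mathbf{f}_d^H\boldsymbol{\Theta}\mathbf{g}_a|$ over $\mathcal{D}$ is $\|\mathbf{f}_d^*\odot\mathbf{g}_a\|_1$. Moreover, if $\mathbf{f}_d=\beta_d\bar{\mathbf{f}}(\phi)$ and $\mathbf{g}_a=\beta_a\bar{\mathbf{f}}(\psi)$ with $\beta_d,\beta_a\ge0$, angles $\phi,\psi$,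 and $\bar{\mathbf{f}}(\phi)=\frac{1}{\sqrt M}(1,e^{-j\pi\sin\phi},\dots,e^{-j\pi(M-1)\sin\phi})^T$, then $\|\mathbf{f}_d^*\odot\mathbf{g}_a\|_1=\|\mathbf{f}_d\|\|\mathbf{g}_a\|$, so the optimal diagonal RIS achieves the same maximal rate as the optimal matrix in $\mathcal{T}$.
   Context: $\mathbf{H}(\boldsymbol{\Theta})=\mathbf{H}_d+\mathbf{f}_a\mathbf{f}_d^H\boldsymbol{\Theta}\mathbf{g}_a\mathbf{g}_d^H$, where $\mathbf{H}_d\in\mathbb{C}^{N_R\times N_T}$, $\mathbf{f}_a\in\mathbb{C}^{N_R}$, $\mathbf{f}_d,\mathbf{g}_a\in\mathbb{C}^M$, $\mathbf{g}_d\in\mathbb{C}^{N_T}$, $\mathbf{R}_{xx}$ Hermitian PSD, $\sigma^2>0$. $\mathcal{T}$ is the set of complex symmetric unitary $M\times M$ matrices. $\odot$ is the entrywise (Hadamard) product, $\|\cdot\|_1$ the $\ell_1$ norm, $\mathbf{v}(m)$ the $m$th entry of $\mathbf{v}$, $\angle$ the argument of a complex number, $(\cdot)^*$ complex conjugation. *)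

theory Defs
  imports "Jordan_Normal_Form.Determinant" "Jordan_Normal_Form.Conjugate"
begin

definition ctrans :: "complex mat \<Rightarrow> complex mat" where
  "ctrans A = mat (dim_col A) (dim_row A) (\<lambda>(i,j). cnj (A $$ (j,i)))"

definition vh :: "complex vec \<Rightarrow> complex vec \<Rightarrow> complex" where
  "vh x y = (\<Sum>i<dim_vec x. cnj (x $ i) * y $ i)"

definition outer :: "complex vec \<Rightarrow> complex vec \<Rightarrow> complex mat" where
  "outer x y = mat (dim_vec x) (dim_vec y) (\<lambda>(i,j). x $ i * cnj (y $ j))"

definition vnorm :: "complex vec \<Rightarrow> real" where
  "vnorm x = sqrt (\<Sum>i<dim_vec x. (cmod (x $ i))^2)"

definition minv :: "complex mat \<Rightarrow> complex mat" where
  "minv A = (SOME B. B \<in> carrier_mat (dim_row A) (dim_row A) \<and>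
                     A * B = 1\<^sub>m (dim_row A) \<and> B * A = 1\<^sub>m (dim_row A))"

definition herm_psd :: "nat \<Rightarrow> complex mat \<Rightarrow> bool" where
  "herm_psd n R \<longleftrightarrow> R \<in> carrier_mat n n \<and> ctrans R = R \<and>
     (\<forall>x \<in> carrier_vec n. 0 \<le> Re (vh x (R *\<^sub>v x)))"

definition Hch :: "complex mat \<Rightarrow> complex vec \<Rightarrow> complex vec \<Rightarrow> complex vec \<Rightarrow> complex vec
                    \<Rightarrow> complex mat \<Rightarrow> complex mat" where
  "Hch Hd fa fd ga gd Th = Hd + outer fa fd * Th * outer ga gd"

definition rate :: "real \<Rightarrow> complex mat \<Rightarrow> complex mat \<Rightarrow> real" where
  "rate s2 R H = ln (Re (det (1\<^sub>m (dim_row H) + of_real (1 / s2) \<cdot>\<^sub>m (H * R * ctrans H))))"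

definition diag_phase :: "nat \<Rightarrow> (nat \<Rightarrow> real) \<Rightarrow> complex mat" where
  "diag_phase M phi = mat_diag M (\<lambda>m. cis (phi m))"

definition sym_unitary :: "nat \<Rightarrow> complex mat set" where
  "sym_unitary M = {Th. Th \<in> carrier_mat M M \<and> transpose_mat Th = Th \<and>
                        ctrans Th * Th = 1\<^sub>m M \<and> Th * ctrans Th = 1\<^sub>m M}"

definition fbar :: "nat \<Rightarrow> real \<Rightarrow> complex vec" where
  "fbar M phi = vec M (\<lambda>k. of_real (1 / sqrt (real M)) * cis (- pi * real k * sin phi))"

end

theory Submission
  imports Defs "Jordan_Normal_Form.Char_Poly" "HOL-Analysis.L2_Norm"
begin

text \<open>
  Write \<open>c = f\<^sub>d\<^sup>H \<Theta> g\<^sub>a\<close>, so that \<open>H(\<Theta>) = H\<^sub>d + c f\<^sub>a g\<^sub>d\<^sup>H\<close>. Expanding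
  \<open>I + H R H\<^sup>H/\<sigma>\<^sup>2\<close> gives \<open>A\<close> (the matrix for \<open>H\<^sub>d\<close>) plus two outer products, and the
  matrix determinant lemma turns the determinant into \<open>det A \<cdot> (1 + 2 Re (c \<alpha>)/\<sigma>\<^sup>2 + |c|\<^sup>2 \<kappa>)\<close>,
  where \<open>\<alpha>\<close> is the quantity whose argument defines \<open>\<theta>\<^sub>o\<^sub>p\<^sub>t\<close>. This quadratic is positive for
  every \<open>c\<close>, which forces \<open>\<kappa> \<ge> 0\<close>; so on a disc \<open>|c| \<le> S\<close> it is maximised by any \<open>c\<close>
  with \<open>|c| = S\<close> and \<open>c \<alpha>\<close> real and nonnegative. Over diagonal phase matrices \<open>|c| \<le> \<parallel>f\<^sub>d\<^sup>* \<odot> g\<^sub>a\<parallel>\<^sub>1\<close>,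
  attained by the phases \<open>\<theta>\<^sub>m\<close>, and the common phase \<open>\<theta>\<^sub>o\<^sub>p\<^sub>t\<close> aligns \<open>c\<close> with \<open>\<alpha>\<close>. For a
  unitary \<open>\<Theta>\<close>, Cauchy--Schwarz gives \<open>|c| \<le> \<parallel>f\<^sub>d\<parallel> \<parallel>g\<^sub>a\<parallel>\<close>, which for two steering vectors
  is the same \<open>\<ell>\<^sub>1\<close> bound.
\<close>

section \<open>Conjugate transpose, inner products and outer products\<close>

lemma ctrans_carrier[simp]: "A \<in> carrier_mat n m \<Longrightarrow> ctrans A \<in> carrier_mat m n"
  by (auto simp: ctrans_def)

lemma ctrans_dim[simp]: "dim_row (ctrans A) = dim_col A" "dim_col (ctrans A) = dim_row A"
  by (auto simp: ctrans_def)

lemma ctrans_index[simp]: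
  "i < dim_col A \<Longrightarrow> j < dim_row A \<Longrightarrow> ctrans A $$ (i,j) = cnj (A $$ (j,i))"
  by (auto simp: ctrans_def)

lemma ctrans_ctrans[simp]: "ctrans (ctrans A) = A"
  by (rule eq_matI) auto

lemma ctrans_one[simp]: "ctrans (1\<^sub>m n) = 1\<^sub>m n"
  by (rule eq_matI) auto

lemma ctrans_mult:
  "A \<in> carrier_mat n k \<Longrightarrow> B \<in> carrier_mat k m \<Longrightarrow> ctrans (A * B) = ctrans B * ctrans A"
  by (rule eq_matI) (auto simp: scalar_prod_def mult.commute)

lemma ctrans_add:
  "A \<in> carrier_mat n m \<Longrightarrow> B \<in> carrier_mat n m \<Longrightarrow> ctrans (A + B) = ctrans A + ctrans B"
  by (rule eq_matI) auto

lemma ctrans_smult: "ctrans (a \<cdot>\<^sub>m A) = cnj a \<cdot>\<^sub>m ctrans A"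
  by (rule eq_matI) auto

lemma smult_mat_vec: "B \<in> carrier_mat n m \<Longrightarrow> x \<in> carrier_vec m \<Longrightarrow> (k \<cdot>\<^sub>m B) *\<^sub>v x = k \<cdot>\<^sub>v (B *\<^sub>v x)"
  by (rule eq_vecI) (auto simp: scalar_prod_def sum_distrib_left mult_ac)

lemma vh_swap: "x \<in> carrier_vec n \<Longrightarrow> y \<in> carrier_vec n \<Longrightarrow> vh y x = cnj (vh x y)"
  by (simp add: vh_def mult.commute)

lemma vh_add:
  "x \<in> carrier_vec n \<Longrightarrow> y \<in> carrier_vec n \<Longrightarrow> z \<in> carrier_vec n \<Longrightarrow> vh x (y + z) = vh x y + vh x z"
  by (simp add: vh_def sum.distrib algebra_simps)

lemma vh_add_left: "x \<in> carrier_vec n \<Longrightarrow> y \<in> carrier_vec n \<Longrightarrow> vh (x + y) z = vh x z + vh y z"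
  by (simp add: vh_def sum.distrib algebra_simps)

lemma vh_smult: "x \<in> carrier_vec n \<Longrightarrow> y \<in> carrier_vec n \<Longrightarrow> vh x (k \<cdot>\<^sub>v y) = k * vh x y"
  by (simp add: vh_def sum_distrib_left mult_ac)

lemma vh_smult_left: "x \<in> carrier_vec n \<Longrightarrow> vh (k \<cdot>\<^sub>v x) y = cnj k * vh x y"
  by (simp add: vh_def sum_distrib_left mult_ac)

lemma vh_self: "x \<in> carrier_vec n \<Longrightarrow> vh x x = of_real (\<Sum>i<n. (cmod (x $ i))\<^sup>2)"
  unfolding vh_def of_real_sum
  by (rule sum.cong) (auto simp: complex_norm_square[symmetric] mult.commute)

lemma sum_cmod_square_pos:
  assumes "x \<in> carrier_vec n" "x \<noteq> 0\<^sub>v n"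
  shows "(\<Sum>i<n. (cmod (x $ i))\<^sup>2) > 0"
proof -
  from assms obtain i where i: "i < n" "x $ i \<noteq> 0"
    by (metis eq_vecI carrier_vecD index_zero_vec)
  have "(cmod (x $ i))\<^sup>2 \<le> (\<Sum>i<n. (cmod (x $ i))\<^sup>2)"
    using i by (intro member_le_sum) auto
  with i show ?thesis by (smt (verit) zero_less_power2 norm_eq_zero)
qed

lemma vh_adjoint:
  assumes A: "A \<in> carrier_mat n m" and x: "x \<in> carrier_vec n" and y: "y \<in> carrier_vec m"
  shows "vh x (A *\<^sub>v y) = vh (ctrans A *\<^sub>v x) y"
proof -
  have "vh x (A *\<^sub>v y) = (\<Sum>i<n. \<Sum>j<m. cnj (x $ i) * (A $$ (i,j) * y $ j))"
    using assms by (simp add: vh_def scalar_prod_def sum_distrib_left lessThan_atLeast0)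
  also have "\<dots> = (\<Sum>j<m. \<Sum>i<n. cnj (x $ i) * (A $$ (i,j) * y $ j))"
    by (rule sum.swap)
  also have "\<dots> = vh (ctrans A *\<^sub>v x) y"
    using assms by (simp add: vh_def scalar_prod_def sum_distrib_left lessThan_atLeast0 mult_ac)
  finally show ?thesis .
qed

lemma outer_carrier[simp]:
  "x \<in> carrier_vec n \<Longrightarrow> y \<in> carrier_vec m \<Longrightarrow> outer x y \<in> carrier_mat n m"
  by (auto simp: outer_def)

lemma outer_dim[simp]: "dim_row (outer x y) = dim_vec x" "dim_col (outer x y) = dim_vec y"
  by (auto simp: outer_def)

lemma outer_index[simp]:
  "i < dim_vec x \<Longrightarrow> j < dim_vec y \<Longrightarrow> outer x y $$ (i,j) = x $ i * cnj (y $ j)"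
  by (auto simp: outer_def)

lemma smult_outer: "a \<cdot>\<^sub>m outer x y = outer x (cnj a \<cdot>\<^sub>v y)"
  by (rule eq_matI) auto

lemma outer_mult_mat:
  "x \<in> carrier_vec n \<Longrightarrow> y \<in> carrier_vec k \<Longrightarrow> B \<in> carrier_mat k m \<Longrightarrow>
   outer x y * B = outer x (ctrans B *\<^sub>v y)"
  by (rule eq_matI) (auto simp: scalar_prod_def sum_distrib_left mult_ac)

lemma mat_mult_outer:
  "x \<in> carrier_vec k \<Longrightarrow> y \<in> carrier_vec m \<Longrightarrow> B \<in> carrier_mat n k \<Longrightarrow>
   B * outer x y = outer (B *\<^sub>v x) y"
  by (rule eq_matI) (auto simp: scalar_prod_def sum_distrib_left mult_ac)

lemma outer_mult_outer:
  "x \<in> carrier_vec n \<Longrightarrow> y \<in> carrier_vec k \<Longrightarrow> u \<in> carrier_vec k \<Longrightarrow> v \<in> carrier_vec m \<Longrightarrow>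
   outer x y * outer u v = vh y u \<cdot>\<^sub>m outer x v"
  by (rule eq_matI)
    (auto simp: scalar_prod_def vh_def sum_distrib_left sum_distrib_right lessThan_atLeast0 mult_ac)

lemma vh_cauchy_schwarz:
  assumes x: "x \<in> carrier_vec n" and y: "y \<in> carrier_vec n"
  shows "cmod (vh x y) \<le> vnorm x * vnorm y"
proof -
  have "cmod (vh x y) \<le> (\<Sum>i<n. \<bar>cmod (x $ i)\<bar> * \<bar>cmod (y $ i)\<bar>)"
    unfolding vh_def using x by (auto intro!: order_trans[OF norm_sum] simp: norm_mult)
  also have "\<dots> \<le> L2_set (\<lambda>i. cmod (x $ i)) {..<n} * L2_set (\<lambda>i. cmod (y $ i)) {..<n}"
    by (rule L2_set_mult_ineq)
  also have "\<dots> = vnorm x * vnorm y"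
    using x y by (simp add: vnorm_def L2_set_def)
  finally show ?thesis .
qed

lemma vnorm_unitary:
  assumes T: "T \<in> carrier_mat n n" and unitary: "ctrans T * T = 1\<^sub>m n" and v: "v \<in> carrier_vec n"
  shows "vnorm (T *\<^sub>v v) = vnorm v"
proof -
  have Tv: "T *\<^sub>v v \<in> carrier_vec n" using T v by simp
  have "vh (T *\<^sub>v v) (T *\<^sub>v v) = vh (ctrans T *\<^sub>v (T *\<^sub>v v)) v"
    by (rule vh_adjoint[OF T Tv v])
  also have "ctrans T *\<^sub>v (T *\<^sub>v v) = v"
    using T v unitary by (simp add: assoc_mult_mat_vec[symmetric, of _ n n])
  finally have "vh (T *\<^sub>v v) (T *\<^sub>v v) = vh v v" .
  hence "(\<Sum>i<n. (cmod ((T *\<^sub>v v) $ i))\<^sup>2) = (\<Sum>i<n. (cmod (v $ i))\<^sup>2)"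
    unfolding vh_self[OF Tv] vh_self[OF v] of_real_eq_iff .
  thus ?thesis using Tv v by (simp only: vnorm_def carrier_vecD)
qed

section \<open>Determinants\<close>

lemma det_one_add_mult_swap:
  fixes X Y :: "'a :: idom mat"
  assumes X: "X \<in> carrier_mat n k" and Y: "Y \<in> carrier_mat k n"
  shows "det (1\<^sub>m n + X * Y) = det (1\<^sub>m k + Y * X)"
proof -
  define L where "L = four_block_mat (1\<^sub>m n) (0\<^sub>m n k) (- Y) (1\<^sub>m k)"
  define U where "U = four_block_mat (1\<^sub>m n) X (0\<^sub>m k n) (1\<^sub>m k + Y * X)"
  define U' where "U' = four_block_mat (1\<^sub>m n + X * Y) X (0\<^sub>m k n) (1\<^sub>m k)"
  have L: "L \<in> carrier_mat (n+k) (n+k)" and U: "U \<in> carrier_mat (n+k) (n+k)"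
    and U': "U' \<in> carrier_mat (n+k) (n+k)"
    unfolding L_def U_def U'_def using X Y by auto
  have e1: "(- Y) * X + 1\<^sub>m k * (1\<^sub>m k + Y * X) = 1\<^sub>m k"
    using X Y by (intro eq_matI) (auto simp: scalar_prod_def sum_negf)
  have e2: "(1\<^sub>m n + X * Y) * 1\<^sub>m n + X * (- Y) = 1\<^sub>m n"
    using X Y by (intro eq_matI) (auto simp: scalar_prod_def sum_negf)
  have "L * U = four_block_mat (1\<^sub>m n * 1\<^sub>m n + 0\<^sub>m n k * 0\<^sub>m k n)
      (1\<^sub>m n * X + 0\<^sub>m n k * (1\<^sub>m k + Y * X))
      ((- Y) * 1\<^sub>m n + 1\<^sub>m k * 0\<^sub>m k n) ((- Y) * X + 1\<^sub>m k * (1\<^sub>m k + Y * X))"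
    unfolding L_def U_def using X Y by (intro mult_four_block_mat) auto
  also have "\<dots> = four_block_mat (1\<^sub>m n) X (- Y) (1\<^sub>m k)"
    unfolding e1 using X Y by simp
  finally have LU: "L * U = four_block_mat (1\<^sub>m n) X (- Y) (1\<^sub>m k)" .
  have "U' * L = four_block_mat ((1\<^sub>m n + X * Y) * 1\<^sub>m n + X * (- Y))
      ((1\<^sub>m n + X * Y) * 0\<^sub>m n k + X * 1\<^sub>m k)
      (0\<^sub>m k n * 1\<^sub>m n + 1\<^sub>m k * (- Y)) (0\<^sub>m k n * 0\<^sub>m n k + 1\<^sub>m k * 1\<^sub>m k)"
    unfolding L_def U'_def using X Y by (intro mult_four_block_mat) auto
  also have "\<dots> = four_block_mat (1\<^sub>m n) X (- Y) (1\<^sub>m k)"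
    unfolding e2 using X Y by simp
  finally have U'L: "U' * L = four_block_mat (1\<^sub>m n) X (- Y) (1\<^sub>m k)" .
  have "det L = 1" unfolding L_def
    by (subst det_four_block_mat_upper_right_zero[of _ n _ k]) (use Y in auto)
  moreover have "det U = det (1\<^sub>m k + Y * X)" unfolding U_def
    by (subst det_four_block_mat_lower_left_zero[of _ n _ k]) (use X Y in auto)
  moreover have "det U' = det (1\<^sub>m n + X * Y)" unfolding U'_def
    by (subst det_four_block_mat_lower_left_zero[of _ n _ k]) (use X Y in auto)
  ultimately show ?thesis
    using det_mult[OF L U] det_mult[OF U' L] LU U'L by simp
qed

lemma det_2x2:
  assumes "A \<in> carrier_mat 2 2"
  shows "det A = A $$ (0,0) * A $$ (1,1) - A $$ (0,1) * A $$ (1,0)"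
proof -
  have "det A = (\<Sum>j<2. A $$ (0, j) * cofactor A 0 j)"
    using laplace_expansion_row[OF assms, of 0] by simp
  also have "\<dots> = A $$ (0,0) * A $$ (1,1) - A $$ (0,1) * A $$ (1,0)"
    using assms by (simp add: cofactor_def det_def numeral_2_eq_2 mat_delete_def)
  finally show ?thesis .
qed

lemma det_add_two_outer:
  assumes A: "A \<in> carrier_mat n n" and Ai: "Ai \<in> carrier_mat n n" and inv: "A * Ai = 1\<^sub>m n"
    and a1: "a1 \<in> carrier_vec n" and a2: "a2 \<in> carrier_vec n"
    and b1: "b1 \<in> carrier_vec n" and b2: "b2 \<in> carrier_vec n"
  shows "det (A + outer a1 b1 + outer a2 b2) = det A *
     ((1 + vh b1 (Ai *\<^sub>v a1)) * (1 + vh b2 (Ai *\<^sub>v a2)) - vh b1 (Ai *\<^sub>v a2) * vh b2 (Ai *\<^sub>v a1))"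
proof -
  define X where "X = mat n 2 (\<lambda>(i,j). (if j = 0 then Ai *\<^sub>v a1 else Ai *\<^sub>v a2) $ i)"
  define Y where "Y = mat 2 n (\<lambda>(i,j). cnj ((if i = 0 then b1 else b2) $ j))"
  have X: "X \<in> carrier_mat n 2" and Y: "Y \<in> carrier_mat 2 n" unfolding X_def Y_def by auto
  have XY: "X * Y = outer (Ai *\<^sub>v a1) b1 + outer (Ai *\<^sub>v a2) b2"
    using Ai a1 a2 b1 b2 unfolding X_def Y_def
    by (intro eq_matI) (auto simp: scalar_prod_def numeral_2_eq_2)
  have inv_outer: "A * outer (Ai *\<^sub>v a) b = outer a b"
    if "a \<in> carrier_vec n" "b \<in> carrier_vec n" for a b
    using A Ai inv that
    by (subst mat_mult_outer[of _ n _ n]) (auto simp: assoc_mult_mat_vec[symmetric])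
  have "A * (1\<^sub>m n + X * Y) = A * 1\<^sub>m n + A * (X * Y)"
    using A X Y by (intro mult_add_distrib_mat) auto
  also have "A * (X * Y) = A * outer (Ai *\<^sub>v a1) b1 + A * outer (Ai *\<^sub>v a2) b2"
    unfolding XY using A Ai a1 a2 b1 b2 by (intro mult_add_distrib_mat) auto
  also have "A * 1\<^sub>m n + (\<dots>) = A + outer a1 b1 + outer a2 b2"
    using A a1 a2 b1 b2 by (simp add: inv_outer assoc_add_mat[of _ n n])
  finally have "A * (1\<^sub>m n + X * Y) = A + outer a1 b1 + outer a2 b2" .
  hence "det (A + outer a1 b1 + outer a2 b2) = det A * det (1\<^sub>m 2 + Y * X)"
    using A X Y det_mult[of A n "1\<^sub>m n + X * Y"] det_one_add_mult_swap[OF X Y] by auto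
  also have "det (1\<^sub>m 2 + Y * X) = (1\<^sub>m 2 + Y * X) $$ (0,0) * (1\<^sub>m 2 + Y * X) $$ (1,1)
      - (1\<^sub>m 2 + Y * X) $$ (0,1) * (1\<^sub>m 2 + Y * X) $$ (1,0)"
    using X Y by (intro det_2x2) auto
  also have "\<dots> =
      (1 + vh b1 (Ai *\<^sub>v a1)) * (1 + vh b2 (Ai *\<^sub>v a2)) - vh b1 (Ai *\<^sub>v a2) * vh b2 (Ai *\<^sub>v a1)"
    using X Y Ai a1 a2 b1 b2 unfolding X_def Y_def
    by (simp add: scalar_prod_def vh_def lessThan_atLeast0)
  finally show ?thesis .
qed

lemma prod_list_real_pos:
  "\<forall>a\<in>set as. Im a = 0 \<and> Re a > 0 \<Longrightarrow> Im (prod_list as) = 0 \<and> Re (prod_list as) > 0"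
  by (induction as) auto

lemma poly_prod_linear_factors_0:
  "poly (\<Prod>a\<leftarrow>as. [:- a, 1:]) 0 = (-1) ^ length as * prod_list (as :: complex list)"
  by (induction as) (auto simp: poly_prod_list)

text \<open>The determinant is the product of the eigenvalues, each of which is a positive real.\<close>

lemma hermitian_pos_def_det_pos:
  assumes M: "M \<in> carrier_mat n n" and herm: "ctrans M = M"
    and pd: "\<And>x. x \<in> carrier_vec n \<Longrightarrow> x \<noteq> 0\<^sub>v n \<Longrightarrow> Re (vh x (M *\<^sub>v x)) > 0"
  shows "Im (det M) = 0 \<and> Re (det M) > 0"
proof -
  obtain as where cp: "char_poly M = (\<Prod>a\<leftarrow>as. [:- a, 1:])" and len: "length as = n"
    using char_poly_factorized[OF M] by blast
  have "char_matrix M 0 = M" using M unfolding char_matrix_def by (intro eq_matI) auto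
  moreover have "- M = (-1) \<cdot>\<^sub>m M" by (intro eq_matI) auto
  ultimately have "poly (char_poly M) 0 = (-1) ^ n * det M"
    unfolding char_poly_matrix[OF M] using M by simp
  hence det_M: "det M = prod_list as" unfolding cp poly_prod_linear_factors_0 len by simp
  have "Im a = 0 \<and> Re a > 0" if a: "a \<in> set as" for a
  proof -
    have "poly (char_poly M) a = 0" unfolding cp using a
      by (induction as) (auto simp: poly_prod_list)
    hence "eigenvalue M a" using eigenvalue_root_char_poly[OF M] by simp
    then obtain v where v: "v \<in> carrier_vec n" "v \<noteq> 0\<^sub>v n" "M *\<^sub>v v = a \<cdot>\<^sub>v v"
      unfolding eigenvalue_def eigenvector_def using M by auto
    define s where "s = (\<Sum>i<n. (cmod (v $ i))\<^sup>2)"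
    have s: "s > 0" unfolding s_def using sum_cmod_square_pos[OF v(1,2)] .
    have quad: "vh v (M *\<^sub>v v) = a * of_real s"
      unfolding v(3) s_def vh_smult[OF v(1,1)] vh_self[OF v(1)] ..
    have "vh v (M *\<^sub>v v) = cnj (vh v (M *\<^sub>v v))"
      using vh_adjoint[OF M v(1) v(1)] vh_swap[of v n "M *\<^sub>v v"] herm v M by auto
    hence "Im (vh v (M *\<^sub>v v)) = 0" by (metis cnj.simps(2) neg_equal_zero)
    with pd[OF v(1,2)] quad s show ?thesis by (auto simp: zero_less_mult_iff)
  qed
  thus ?thesis unfolding det_M using prod_list_real_pos by blast
qed

lemma minv_inverse:
  assumes A: "A \<in> carrier_mat n n" and "det A \<noteq> 0"
  shows "minv A \<in> carrier_mat n n \<and> A * minv A = 1\<^sub>m n \<and> minv A * A = 1\<^sub>m n"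
proof -
  have "A \<in> Units (ring_mat TYPE(complex) n ())" by (rule det_non_zero_imp_unit[OF assms])
  hence "\<exists>B. B \<in> carrier_mat n n \<and> A * B = 1\<^sub>m n \<and> B * A = 1\<^sub>m n"
    unfolding Units_def ring_mat_def by auto
  thus ?thesis unfolding minv_def using A by (simp only: carrier_matD(1)) (rule someI_ex)
qed

lemma minv_hermitian:
  assumes A: "A \<in> carrier_mat n n" and "det A \<noteq> 0" and herm: "ctrans A = A"
  shows "ctrans (minv A) = minv A"
proof -
  note inv = minv_inverse[OF assms(1,2)]
  have B: "minv A \<in> carrier_mat n n" and cB: "ctrans (minv A) \<in> carrier_mat n n"
    using inv by auto
  have left_inv: "ctrans (minv A) * A = 1\<^sub>m n"
    using ctrans_mult[OF A B] inv herm by simp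
  have "ctrans (minv A) = ctrans (minv A) * (A * minv A)" using inv right_mult_one_mat[OF cB] by simp
  also have "\<dots> = minv A" using left_inv B by (simp add: assoc_mult_mat[OF cB A B, symmetric])
  finally show ?thesis .
qed

section \<open>The SNR matrix of a channel\<close>

definition snr_mat :: "real \<Rightarrow> complex mat \<Rightarrow> complex mat \<Rightarrow> complex mat" where
  "snr_mat k R H = 1\<^sub>m (dim_row H) + of_real k \<cdot>\<^sub>m (H * R * ctrans H)"

lemma rate_snr_mat: "rate s2 R H = ln (Re (det (snr_mat (1 / s2) R H)))"
  by (simp add: rate_def snr_mat_def)

lemma snr_mat_carrier:
  "H \<in> carrier_mat n m \<Longrightarrow> R \<in> carrier_mat m m \<Longrightarrow> snr_mat k R H \<in> carrier_mat n n"
  unfolding snr_mat_def by (auto dest: carrier_matD)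

lemma snr_mat_hermitian:
  assumes H: "H \<in> carrier_mat n m" and R: "herm_psd m R"
  shows "ctrans (snr_mat k R H) = snr_mat k R H"
proof -
  have Rc: "R \<in> carrier_mat m m" and Rh: "ctrans R = R" using R unfolding herm_psd_def by auto
  have "ctrans (H * R * ctrans H) = ctrans (ctrans H) * ctrans (H * R)"
    using H Rc by (intro ctrans_mult[of _ n m]) auto
  also have "\<dots> = H * (R * ctrans H)" using H Rc Rh by (simp add: ctrans_mult[of _ n m _ m])
  also have "\<dots> = H * R * ctrans H" using H Rc by (simp add: assoc_mult_mat[of _ n m _ m _ n])
  finally have "ctrans (H * R * ctrans H) = H * R * ctrans H" .
  moreover have "ctrans (snr_mat k R H) = ctrans (1\<^sub>m n) + ctrans (of_real k \<cdot>\<^sub>m (H * R * ctrans H))"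
    unfolding snr_mat_def using H Rc by (subst carrier_matD(1)[OF H], intro ctrans_add[of _ n n]) auto
  ultimately show ?thesis using H unfolding snr_mat_def ctrans_smult by simp
qed

lemma snr_mat_pos_def:
  assumes H: "H \<in> carrier_mat n m" and R: "herm_psd m R" and k: "k \<ge> 0"
    and x: "x \<in> carrier_vec n" "x \<noteq> 0\<^sub>v n"
  shows "Re (vh x (snr_mat k R H *\<^sub>v x)) > 0"
proof -
  have Rc: "R \<in> carrier_mat m m" using R unfolding herm_psd_def by auto
  define y where "y = ctrans H *\<^sub>v x"
  have y: "y \<in> carrier_vec m" unfolding y_def using H x(1) by (intro mult_mat_vec_carrier) auto
  have Ry: "R *\<^sub>v y \<in> carrier_vec m" using Rc y by simp
  have HR: "H * R \<in> carrier_mat n m" using H Rc by simp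
  have B: "H * R * ctrans H \<in> carrier_mat n n" using HR H by simp
  have "snr_mat k R H *\<^sub>v x = 1\<^sub>m n *\<^sub>v x + (of_real k \<cdot>\<^sub>m (H * R * ctrans H)) *\<^sub>v x"
    unfolding snr_mat_def carrier_matD(1)[OF H] using B x by (intro add_mult_distrib_mat_vec) auto
  also have "(of_real k \<cdot>\<^sub>m (H * R * ctrans H)) *\<^sub>v x = of_real k \<cdot>\<^sub>v (H *\<^sub>v (R *\<^sub>v y))"
    unfolding smult_mat_vec[OF B x(1)] y_def
    using assoc_mult_mat_vec[OF HR ctrans_carrier[OF H] x(1)] assoc_mult_mat_vec[OF H Rc y[unfolded y_def]]
    by simp
  finally have "snr_mat k R H *\<^sub>v x = x + of_real k \<cdot>\<^sub>v (H *\<^sub>v (R *\<^sub>v y))" using x by simp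
  hence "vh x (snr_mat k R H *\<^sub>v x) = vh x x + of_real k * vh x (H *\<^sub>v (R *\<^sub>v y))"
    using H x Ry by (simp add: vh_add[of _ n] vh_smult[of _ n])
  also have "vh x (H *\<^sub>v (R *\<^sub>v y)) = vh y (R *\<^sub>v y)"
    unfolding vh_adjoint[OF H x(1) Ry] by (simp add: y_def)
  finally have "vh x (snr_mat k R H *\<^sub>v x) = vh x x + of_real k * vh y (R *\<^sub>v y)" .
  moreover have "Re (vh y (R *\<^sub>v y)) \<ge> 0" using R y unfolding herm_psd_def by auto
  moreover have "Re (vh x x) > 0" using vh_self[OF x(1)] sum_cmod_square_pos[OF x] by simp
  ultimately show ?thesis using k by (simp add: add_pos_nonneg)
qed

lemma det_snr_mat_pos:
  assumes H: "H \<in> carrier_mat n m" and R: "herm_psd m R" and k: "k \<ge> 0"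
  shows "Im (det (snr_mat k R H)) = 0 \<and> Re (det (snr_mat k R H)) > 0"
proof -
  have "R \<in> carrier_mat m m" using R unfolding herm_psd_def by simp
  thus ?thesis
    by (intro hermitian_pos_def_det_pos[OF snr_mat_carrier[OF H]] snr_mat_hermitian[OF H R]
        snr_mat_pos_def[OF H R k])
qed

lemma add_outer_mult_add_outer:
  assumes Hd: "Hd \<in> carrier_mat nr nt" and R: "R \<in> carrier_mat nt nt" and fa: "fa \<in> carrier_vec nr"
    and v1: "v1 \<in> carrier_vec nt" and gd: "gd \<in> carrier_vec nt" and v2: "v2 \<in> carrier_vec nr"
  shows "(Hd * R + outer fa v1) * (ctrans Hd + outer gd v2) =
     Hd * R * ctrans Hd + outer fa (Hd *\<^sub>v v1) + (outer ((Hd * R) *\<^sub>v gd) v2 + vh v1 gd \<cdot>\<^sub>m outer fa v2)"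
proof -
  have HR: "Hd * R \<in> carrier_mat nr nt" using Hd R by simp
  have cH: "ctrans Hd \<in> carrier_mat nt nr" using Hd by simp
  have o1: "outer fa v1 \<in> carrier_mat nr nt" using fa v1 by simp
  have o2: "outer gd v2 \<in> carrier_mat nt nr" using gd v2 by simp
  have "(Hd * R + outer fa v1) * (ctrans Hd + outer gd v2) =
        (Hd * R + outer fa v1) * ctrans Hd + (Hd * R + outer fa v1) * outer gd v2"
    by (rule mult_add_distrib_mat[of _ nr nt]) (use HR o1 cH o2 in auto)
  also have "(Hd * R + outer fa v1) * ctrans Hd = Hd * R * ctrans Hd + outer fa v1 * ctrans Hd"
    by (rule add_mult_distrib_mat[of _ nr nt]) (use HR o1 cH in auto)
  also have "(Hd * R + outer fa v1) * outer gd v2 = Hd * R * outer gd v2 + outer fa v1 * outer gd v2"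
    by (rule add_mult_distrib_mat[of _ nr nt]) (use HR o1 o2 in auto)
  also have "outer fa v1 * ctrans Hd = outer fa (Hd *\<^sub>v v1)"
    using outer_mult_mat[OF fa v1 cH] by simp
  also have "Hd * R * outer gd v2 = outer ((Hd * R) *\<^sub>v gd) v2"
    by (rule mat_mult_outer[OF gd v2 HR])
  also have "outer fa v1 * outer gd v2 = vh v1 gd \<cdot>\<^sub>m outer fa v2"
    by (rule outer_mult_outer[OF fa v1 gd v2])
  finally show ?thesis .
qed

lemma snr_mat_add_smult_outer:
  assumes Hd: "Hd \<in> carrier_mat nr nt" and R: "herm_psd nt R"
    and fa: "fa \<in> carrier_vec nr" and gd: "gd \<in> carrier_vec nt"
  defines "w \<equiv> Hd *\<^sub>v (R *\<^sub>v gd)"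
  shows "snr_mat k R (Hd + c \<cdot>\<^sub>m outer fa gd) = snr_mat k R Hd
      + outer fa (of_real k \<cdot>\<^sub>v (cnj c \<cdot>\<^sub>v w + (cnj (c * vh (R *\<^sub>v gd) gd) * c) \<cdot>\<^sub>v fa))
      + outer w (of_real k \<cdot>\<^sub>v (c \<cdot>\<^sub>v fa))"
proof -
  have Rc: "R \<in> carrier_mat nt nt" and Rh: "ctrans R = R" using R unfolding herm_psd_def by auto
  define u where "u = R *\<^sub>v gd"
  have u: "u \<in> carrier_vec nt" unfolding u_def using Rc gd by simp
  have F: "outer fa gd \<in> carrier_mat nr nt" using fa gd by simp
  have "(Hd + c \<cdot>\<^sub>m outer fa gd) * R = Hd * R + (c \<cdot>\<^sub>m outer fa gd) * R"
    using Hd F Rc by (intro add_mult_distrib_mat) auto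
  also have "(c \<cdot>\<^sub>m outer fa gd) * R = c \<cdot>\<^sub>m outer fa u"
    unfolding u_def mult_smult_assoc_mat[OF F Rc] using outer_mult_mat[OF fa gd Rc] Rh by simp
  finally have left: "(Hd + c \<cdot>\<^sub>m outer fa gd) * R = Hd * R + outer fa (cnj c \<cdot>\<^sub>v u)"
    by (simp add: smult_outer)
  have right: "ctrans (Hd + c \<cdot>\<^sub>m outer fa gd) = ctrans Hd + outer gd (c \<cdot>\<^sub>v fa)"
    by (rule eq_matI) (use Hd fa gd in \<open>auto simp: mult_ac\<close>)
  have "(Hd + c \<cdot>\<^sub>m outer fa gd) * R * ctrans (Hd + c \<cdot>\<^sub>m outer fa gd)
     = Hd * R * ctrans Hd + outer fa (Hd *\<^sub>v (cnj c \<cdot>\<^sub>v u))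
       + (outer ((Hd * R) *\<^sub>v gd) (c \<cdot>\<^sub>v fa) + vh (cnj c \<cdot>\<^sub>v u) gd \<cdot>\<^sub>m outer fa (c \<cdot>\<^sub>v fa))"
    unfolding left right by (rule add_outer_mult_add_outer[OF Hd Rc fa _ gd]) (use u fa in auto)
  also have "Hd *\<^sub>v (cnj c \<cdot>\<^sub>v u) = cnj c \<cdot>\<^sub>v w"
    unfolding w_def u_def[symmetric] by (rule mult_mat_vec[OF Hd u])
  also have "(Hd * R) *\<^sub>v gd = w" unfolding w_def by (rule assoc_mult_mat_vec[OF Hd Rc gd])
  also have "vh (cnj c \<cdot>\<^sub>v u) gd = c * vh u gd" using vh_smult_left[OF u] by simp
  finally have prod: "(Hd + c \<cdot>\<^sub>m outer fa gd) * R * ctrans (Hd + c \<cdot>\<^sub>m outer fa gd)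
     = Hd * R * ctrans Hd + outer fa (cnj c \<cdot>\<^sub>v w) + (outer w (c \<cdot>\<^sub>v fa) + (c * vh u gd) \<cdot>\<^sub>m outer fa (c \<cdot>\<^sub>v fa))" .
  have HRH: "Hd * R * ctrans Hd \<in> carrier_mat nr nr"
    using mult_carrier_mat[OF mult_carrier_mat[OF Hd Rc] ctrans_carrier[OF Hd]] .
  have w: "w \<in> carrier_vec nr" unfolding w_def using Hd u u_def by simp
  show ?thesis unfolding snr_mat_def prod u_def[symmetric]
    by (rule eq_matI) (use HRH w fa Hd in \<open>auto simp: algebra_simps\<close>)
qed

lemma vh_hermitian_mult_ctrans_mult_vec:
  assumes Hd: "Hd \<in> carrier_mat nr nt" and Rc: "R \<in> carrier_mat nt nt" and Rh: "ctrans R = R"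
    and B: "B \<in> carrier_mat nr nr" and f: "f \<in> carrier_vec nr" and g: "g \<in> carrier_vec nt"
  shows "vh g ((R * ctrans Hd * B) *\<^sub>v f) = vh (Hd *\<^sub>v (R *\<^sub>v g)) (B *\<^sub>v f)"
proof -
  have cH: "ctrans Hd \<in> carrier_mat nt nr" using Hd by simp
  have Bf: "B *\<^sub>v f \<in> carrier_vec nr" using B f by simp
  have Rg: "R *\<^sub>v g \<in> carrier_vec nt" using Rc g by simp
  have "(R * ctrans Hd * B) *\<^sub>v f = (R * ctrans Hd) *\<^sub>v (B *\<^sub>v f)"
    by (rule assoc_mult_mat_vec[OF mult_carrier_mat[OF Rc cH] B f])
  also have "\<dots> = R *\<^sub>v (ctrans Hd *\<^sub>v (B *\<^sub>v f))" by (rule assoc_mult_mat_vec[OF Rc cH Bf])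
  finally have "vh g ((R * ctrans Hd * B) *\<^sub>v f) = vh g (R *\<^sub>v (ctrans Hd *\<^sub>v (B *\<^sub>v f)))"
    by simp
  also have "\<dots> = vh (R *\<^sub>v g) (ctrans Hd *\<^sub>v (B *\<^sub>v f))"
    using vh_adjoint[OF Rc g, of "ctrans Hd *\<^sub>v (B *\<^sub>v f)"] Rh cH Bf by simp
  also have "\<dots> = vh (Hd *\<^sub>v (R *\<^sub>v g)) (B *\<^sub>v f)"
    using vh_adjoint[OF cH Rg Bf] by simp
  finally show ?thesis .
qed

lemma det_snr_mat_add_smult_outer:
  assumes Hd: "Hd \<in> carrier_mat nr nt" and R: "herm_psd nt R" and k: "k \<ge> 0"
    and fa: "fa \<in> carrier_vec nr" and gd: "gd \<in> carrier_vec nt"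
  defines "A \<equiv> snr_mat k R Hd"
  defines "\<alpha> \<equiv> vh gd ((R * ctrans Hd * minv A) *\<^sub>v fa)"
  obtains \<kappa> where "\<And>c. Re (det (snr_mat k R (Hd + c \<cdot>\<^sub>m outer fa gd)))
                          = Re (det A) * (1 + 2 * k * Re (c * \<alpha>) + (cmod c)\<^sup>2 * \<kappa>)"
proof -
  have Rc: "R \<in> carrier_mat nt nt" and Rh: "ctrans R = R" using R unfolding herm_psd_def by auto
  have A: "A \<in> carrier_mat nr nr" unfolding A_def by (rule snr_mat_carrier[OF Hd Rc])
  have detA: "Im (det A) = 0" "Re (det A) > 0"
    unfolding A_def using det_snr_mat_pos[OF Hd R k] by auto
  hence "det A \<noteq> 0" by auto
  define Ai where "Ai = minv A"
  have Ai: "Ai \<in> carrier_mat nr nr" and inv: "A * Ai = 1\<^sub>m nr"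
    using minv_inverse[OF A \<open>det A \<noteq> 0\<close>] unfolding Ai_def by auto
  have Ai_herm: "ctrans Ai = Ai" unfolding Ai_def A_def
    by (rule minv_hermitian[OF snr_mat_carrier[OF Hd Rc]])
      (use \<open>det A \<noteq> 0\<close> snr_mat_hermitian[OF Hd R] in \<open>auto simp: A_def\<close>)
  define u where "u = R *\<^sub>v gd"
  define w where "w = Hd *\<^sub>v u"
  have w: "w \<in> carrier_vec nr" unfolding w_def u_def using Rc Hd gd by auto
  have Aifa: "Ai *\<^sub>v fa \<in> carrier_vec nr" using Ai fa by auto
  define G11 where "G11 = vh fa (Ai *\<^sub>v fa)"
  define G12 where "G12 = vh fa (Ai *\<^sub>v w)"
  define G22 where "G22 = vh w (Ai *\<^sub>v w)"
  have \<alpha>: "\<alpha> = vh w (Ai *\<^sub>v fa)"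
    unfolding \<alpha>_def Ai_def[symmetric] w_def u_def
    by (rule vh_hermitian_mult_ctrans_mult_vec[OF Hd Rc Rh Ai fa gd])
  have G12: "G12 = cnj \<alpha>"
    unfolding G12_def \<alpha> vh_adjoint[OF Ai fa w] Ai_herm by (rule vh_swap[OF w Aifa])
  define \<kappa> where "\<kappa> = Re (of_real k * vh u gd * G11 + (of_real k)\<^sup>2 * (\<alpha> * G12 - G22 * G11))"
  have "Re (det (snr_mat k R (Hd + c \<cdot>\<^sub>m outer fa gd)))
          = Re (det A) * (1 + 2 * k * Re (c * \<alpha>) + (cmod c)\<^sup>2 * \<kappa>)" for c
  proof -
    define b1 where "b1 = of_real k \<cdot>\<^sub>v (cnj c \<cdot>\<^sub>v w + (cnj (c * vh u gd) * c) \<cdot>\<^sub>v fa)"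
    define b2 where "b2 = of_real k \<cdot>\<^sub>v (c \<cdot>\<^sub>v fa)"
    have b1: "b1 \<in> carrier_vec nr" and b2: "b2 \<in> carrier_vec nr"
      unfolding b1_def b2_def using w fa by auto
    have "snr_mat k R (Hd + c \<cdot>\<^sub>m outer fa gd) = A + outer fa b1 + outer w b2"
      unfolding A_def b1_def b2_def w_def u_def by (rule snr_mat_add_smult_outer[OF Hd R fa gd])
    hence "det (snr_mat k R (Hd + c \<cdot>\<^sub>m outer fa gd)) = det A *
        ((1 + vh b1 (Ai *\<^sub>v fa)) * (1 + vh b2 (Ai *\<^sub>v w)) - vh b1 (Ai *\<^sub>v w) * vh b2 (Ai *\<^sub>v fa))"
      using det_add_two_outer[OF A Ai inv fa w b1 b2] by simp
    also have "vh b1 (Ai *\<^sub>v fa) = of_real k * (c * \<alpha> + c * vh u gd * cnj c * G11)"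
      unfolding b1_def \<alpha> G11_def using w fa
      by (simp add: vh_smult_left[of _ nr] vh_add_left[of _ nr])
    also have "vh b1 (Ai *\<^sub>v w) = of_real k * (c * G22 + c * vh u gd * cnj c * G12)"
      unfolding b1_def G22_def G12_def using w fa
      by (simp add: vh_smult_left[of _ nr] vh_add_left[of _ nr])
    also have "vh b2 (Ai *\<^sub>v w) = of_real k * cnj c * G12"
      unfolding b2_def G12_def using fa by (simp add: vh_smult_left[of _ nr])
    also have "vh b2 (Ai *\<^sub>v fa) = of_real k * cnj c * G11"
      unfolding b2_def G11_def using fa by (simp add: vh_smult_left[of _ nr])
    finally have "det (snr_mat k R (Hd + c \<cdot>\<^sub>m outer fa gd))
        = det A * (1 + of_real k * (c * \<alpha> + cnj c * G12)
        + (c * cnj c) * (of_real k * vh u gd * G11 + (of_real k)\<^sup>2 * (\<alpha> * G12 - G22 * G11)))"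
      by (simp add: algebra_simps power2_eq_square)
    also have "c * cnj c = of_real ((cmod c)\<^sup>2)" by (rule complex_norm_square[symmetric])
    finally show ?thesis unfolding G12 \<kappa>_def using detA by simp
  qed
  thus ?thesis by (rule that)
qed

lemma cis_minus_Arg_mult: "cis (- Arg a) * a = of_real (cmod a)"
proof -
  have "cis (- Arg a) * a = of_real (cmod a) * (cis (- Arg a) * cis (Arg a))"
    by (subst rcis_cmod_Arg[symmetric]) (simp add: rcis_def mult_ac)
  thus ?thesis by (simp add: cis_mult)
qed

lemma Re_cis_minus_Arg_aligned:
  assumes "s \<ge> 0"
  shows "Re (cis (- Arg a) * of_real s * a) = cmod (cis (- Arg a) * of_real s) * cmod a"
proof -
  have "cis (- Arg a) * of_real s * a = of_real s * (cis (- Arg a) * a)"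
    by (simp only: ac_simps)
  also have "\<dots> = of_real (s * cmod a)" unfolding cis_minus_Arg_mult by simp
  finally have aligned: "cis (- Arg a) * of_real s * a = of_real (s * cmod a)" .
  show ?thesis unfolding aligned using assms by (simp add: norm_mult)
qed

section \<open>Maximising a positive quadratic in \<open>c\<close>\<close>

text \<open>Along the ray \<open>c = -t e\<^sup>-\<^sup>i\<^sup>\<angle>\<^sup>a\<close> the linear term is \<open>\<le> 0\<close>, so a negative leading coefficient
  would make the quadratic vanish at \<open>t = (-1/\<kappa>)\<^sup>1\<^sup>/\<^sup>2\<close> or earlier.\<close>

lemma pos_quadratic_coeff_nonneg:
  fixes a :: complex and k \<kappa> :: real
  assumes pos: "\<And>c. 0 < 1 + 2 * k * Re (c * a) + (cmod c)\<^sup>2 * \<kappa>" and k: "k \<ge> 0"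
  shows "\<kappa> \<ge> 0"
proof (rule ccontr)
  assume "\<not> \<kappa> \<ge> 0"
  define t where "t = sqrt (- 1 / \<kappa>)"
  have t: "t \<ge> 0" "t\<^sup>2 * \<kappa> = - 1" unfolding t_def using \<open>\<not> \<kappa> \<ge> 0\<close> by auto
  define c where "c = - of_real t * cis (- Arg a)"
  have "c * a = - of_real t * (cis (- Arg a) * a)" unfolding c_def by (simp add: mult_ac)
  hence "Re (c * a) = - t * cmod a" by (simp add: cis_minus_Arg_mult)
  moreover have "cmod c = t" unfolding c_def using t by (simp add: norm_mult)
  ultimately have "0 < 2 * k * (- t * cmod a)" using pos[of c] t by simp
  moreover have "2 * k * (t * cmod a) \<ge> 0" using k t by simp
  ultimately show False by simp
qed

lemma pos_quadratic_le_aligned: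
  fixes a c c0 :: complex and k \<kappa> :: real
  assumes pos: "\<And>c. 0 < 1 + 2 * k * Re (c * a) + (cmod c)\<^sup>2 * \<kappa>" and k: "k \<ge> 0"
    and le: "cmod c \<le> cmod c0" and aligned: "Re (c0 * a) = cmod c0 * cmod a"
  shows "1 + 2 * k * Re (c * a) + (cmod c)\<^sup>2 * \<kappa> \<le> 1 + 2 * k * Re (c0 * a) + (cmod c0)\<^sup>2 * \<kappa>"
proof -
  have "Re (c * a) \<le> cmod c * cmod a" using complex_Re_le_cmod[of "c * a"] by (simp add: norm_mult)
  also have "\<dots> \<le> Re (c0 * a)" unfolding aligned using le by (simp add: mult_right_mono)
  finally have "2 * k * Re (c * a) \<le> 2 * k * Re (c0 * a)" using k by (simp add: mult_left_mono)
  moreover have "(cmod c)\<^sup>2 * \<kappa> \<le> (cmod c0)\<^sup>2 * \<kappa>"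
    using le pos_quadratic_coeff_nonneg[OF pos k] by (simp add: mult_right_mono power_mono)
  ultimately show ?thesis by simp
qed

lemma rate_add_smult_outer_mono:
  assumes Hd: "Hd \<in> carrier_mat nr nt" and R: "herm_psd nt R" and s2: "s2 > 0"
    and fa: "fa \<in> carrier_vec nr" and gd: "gd \<in> carrier_vec nt"
    and le: "cmod c \<le> cmod c0"
  defines "\<alpha> \<equiv> vh gd ((R * ctrans Hd * minv (snr_mat (1 / s2) R Hd)) *\<^sub>v fa)"
  assumes aligned: "Re (c0 * \<alpha>) = cmod c0 * cmod \<alpha>"
  shows "rate s2 R (Hd + c \<cdot>\<^sub>m outer fa gd) \<le> rate s2 R (Hd + c0 \<cdot>\<^sub>m outer fa gd)"
proof -
  define k where "k = 1 / s2"
  have k: "k \<ge> 0" unfolding k_def using s2 by simp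
  obtain \<kappa> where det: "\<And>c. Re (det (snr_mat k R (Hd + c \<cdot>\<^sub>m outer fa gd)))
      = Re (det (snr_mat k R Hd)) * (1 + 2 * k * Re (c * \<alpha>) + (cmod c)\<^sup>2 * \<kappa>)"
    using det_snr_mat_add_smult_outer[OF Hd R k fa gd] unfolding \<alpha>_def k_def by blast
  have detA: "Re (det (snr_mat k R Hd)) > 0" using det_snr_mat_pos[OF Hd R k] by simp
  have det_pos: "Re (det (snr_mat k R (Hd + c \<cdot>\<^sub>m outer fa gd))) > 0" for c
    using det_snr_mat_pos[OF _ R k, of "Hd + c \<cdot>\<^sub>m outer fa gd" nr] Hd fa gd by simp
  have "0 < 1 + 2 * k * Re (c * \<alpha>) + (cmod c)\<^sup>2 * \<kappa>" for c
    using det_pos[of c] detA unfolding det by (simp add: zero_less_mult_iff)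
  hence "Re (det (snr_mat k R (Hd + c \<cdot>\<^sub>m outer fa gd)))
      \<le> Re (det (snr_mat k R (Hd + c0 \<cdot>\<^sub>m outer fa gd)))"
    unfolding det using pos_quadratic_le_aligned[OF _ k le aligned] detA by simp
  thus ?thesis unfolding rate_snr_mat k_def[symmetric] using det_pos by simp
qed

section \<open>The RIS channel\<close>

lemma Hch_eq_add_smult_outer:
  assumes Hd: "Hd \<in> carrier_mat NR NT" and fa: "fa \<in> carrier_vec NR" and fd: "fd \<in> carrier_vec M"
    and ga: "ga \<in> carrier_vec M" and gd: "gd \<in> carrier_vec NT" and Th: "Th \<in> carrier_mat M M"
  shows "Hch Hd fa fd ga gd Th = Hd + vh fd (Th *\<^sub>v ga) \<cdot>\<^sub>m outer fa gd"
proof -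
  have v: "ctrans Th *\<^sub>v fd \<in> carrier_vec M" by (rule mult_mat_vec_carrier[OF ctrans_carrier[OF Th] fd])
  have "outer fa fd * Th * outer ga gd = outer fa (ctrans Th *\<^sub>v fd) * outer ga gd"
    using outer_mult_mat[OF fa fd Th] by simp
  also have "\<dots> = vh fd (Th *\<^sub>v ga) \<cdot>\<^sub>m outer fa gd"
    unfolding outer_mult_outer[OF fa v ga gd] vh_adjoint[OF Th fd ga] ..
  finally show ?thesis unfolding Hch_def by simp
qed

lemma diag_phase_carrier[simp]: "diag_phase M \<phi> \<in> carrier_mat M M"
  by (simp add: diag_phase_def)

lemma diag_phase_mult_vec:
  assumes v: "v \<in> carrier_vec M"
  shows "diag_phase M \<phi> *\<^sub>v v = vec M (\<lambda>i. cis (\<phi> i) * v $ i)"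
proof (rule eq_vecI)
  fix i assume "i < dim_vec (vec M (\<lambda>i. cis (\<phi> i) * v $ i))"
  hence i: "i < M" by simp
  have "(diag_phase M \<phi> *\<^sub>v v) $ i = (\<Sum>j\<in>{0..<M}. (if i = j then cis (\<phi> j) else 0) * v $ j)"
    using i v by (simp add: diag_phase_def mat_diag_def scalar_prod_def)
  also have "\<dots> = (\<Sum>j\<in>{0..<M}. if j = i then cis (\<phi> i) * v $ i else 0)"
    by (rule sum.cong) auto
  finally show "(diag_phase M \<phi> *\<^sub>v v) $ i = vec M (\<lambda>i. cis (\<phi> i) * v $ i) $ i" using i by simp
qed (simp add: diag_phase_def mat_diag_def)

lemma vh_diag_phase:
  assumes fd: "fd \<in> carrier_vec M" and ga: "ga \<in> carrier_vec M"
  shows "vh fd (diag_phase M \<phi> *\<^sub>v ga) = (\<Sum>m<M. cis (\<phi> m) * (cnj (fd $ m) * ga $ m))"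
  unfolding diag_phase_mult_vec[OF ga] vh_def using fd by (simp add: mult_ac)

lemma cmod_vh_diag_phase_le:
  assumes "fd \<in> carrier_vec M" and "ga \<in> carrier_vec M"
  shows "cmod (vh fd (diag_phase M \<phi> *\<^sub>v ga)) \<le> (\<Sum>m<M. cmod (cnj (fd $ m) * ga $ m))"
  unfolding vh_diag_phase[OF assms] by (rule order_trans[OF norm_sum]) (simp add: norm_mult)

lemma vh_diag_phase_aligned:
  assumes fd: "fd \<in> carrier_vec M" and ga: "ga \<in> carrier_vec M"
    and \<phi>: "\<And>m. m < M \<Longrightarrow> cnj (fd $ m) * ga $ m \<noteq> 0 \<Longrightarrow> \<phi> m = - Arg (cnj (fd $ m) * ga $ m)"
  shows "vh fd (diag_phase M \<phi> *\<^sub>v ga) = of_real (\<Sum>m<M. cmod (cnj (fd $ m) * ga $ m))"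
  unfolding vh_diag_phase[OF fd ga] of_real_sum
proof (rule sum.cong)
  fix m assume "m \<in> {..<M}"
  thus "cis (\<phi> m) * (cnj (fd $ m) * ga $ m) = of_real (cmod (cnj (fd $ m) * ga $ m))"
    using \<phi> cis_minus_Arg_mult by (cases "cnj (fd $ m) * ga $ m = 0") auto
qed simp

lemma vh_smult_mat_mult_vec:
  assumes "fd \<in> carrier_vec M" and "ga \<in> carrier_vec M" and "Th \<in> carrier_mat M M"
  shows "vh fd ((a \<cdot>\<^sub>m Th) *\<^sub>v ga) = a * vh fd (Th *\<^sub>v ga)"
  using assms by (simp add: smult_mat_vec vh_smult[of _ M])

lemma cmod_vh_unitary_le:
  assumes fd: "fd \<in> carrier_vec M" and ga: "ga \<in> carrier_vec M" and Th: "Th \<in> sym_unitary M"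
  shows "cmod (vh fd (Th *\<^sub>v ga)) \<le> vnorm fd * vnorm ga"
proof -
  have Thc: "Th \<in> carrier_mat M M" and unitary: "ctrans Th * Th = 1\<^sub>m M"
    using Th unfolding sym_unitary_def by auto
  have "cmod (vh fd (Th *\<^sub>v ga)) \<le> vnorm fd * vnorm (Th *\<^sub>v ga)"
    using Thc fd ga by (intro vh_cauchy_schwarz) auto
  thus ?thesis unfolding vnorm_unitary[OF Thc unitary ga] .
qed

lemma vnorm_smult_fbar:
  assumes "b \<ge> 0" and "M > 0"
  shows "vnorm (of_real b \<cdot>\<^sub>v fbar M p) = b"
proof -
  have "(\<Sum>i<M. (cmod ((of_real b \<cdot>\<^sub>v fbar M p) $ i))\<^sup>2) = (\<Sum>i<M. b\<^sup>2 / real M)"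
    by (rule sum.cong) (use assms in \<open>auto simp: fbar_def norm_mult norm_divide power_divide power_mult_distrib\<close>)
  thus ?thesis using assms by (simp add: vnorm_def fbar_def)
qed

lemma l1_cnj_mult_fbar:
  assumes bd: "bd \<ge> 0" and ba: "ba \<ge> 0"
  shows "(\<Sum>m<M. cmod (cnj ((of_real bd \<cdot>\<^sub>v fbar M \<phi>) $ m) * (of_real ba \<cdot>\<^sub>v fbar M \<psi>) $ m))
     = vnorm (of_real bd \<cdot>\<^sub>v fbar M \<phi>) * vnorm (of_real ba \<cdot>\<^sub>v fbar M \<psi>)"
proof (cases "M = 0")
  case True thus ?thesis by (simp add: vnorm_def fbar_def)
next
  case False
  hence "(\<Sum>m<M. cmod (cnj ((of_real bd \<cdot>\<^sub>v fbar M \<phi>) $ m) * (of_real ba \<cdot>\<^sub>v fbar M \<psi>) $ m))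
      = (\<Sum>m<M. bd * ba / real M)"
    using real_sqrt_mult_self[of "real M"]
    by (intro sum.cong) (use bd ba in \<open>auto simp: fbar_def norm_mult norm_divide\<close>)
  thus ?thesis using False bd ba by (simp add: vnorm_smult_fbar)
qed

theorem mainTheorem4:
  fixes NR NT M :: nat and Hd R :: "complex mat" and fa fd ga gd :: "complex vec"
    and s2 :: real and thetat :: "nat \<Rightarrow> real"
  assumes Hd: "Hd \<in> carrier_mat NR NT"
    and fa: "fa \<in> carrier_vec NR" and fd: "fd \<in> carrier_vec M"
    and ga: "ga \<in> carrier_vec M" and gd: "gd \<in> carrier_vec NT"
    and R: "herm_psd NT R" and s2: "s2 > 0"
    and thetat: "\<And>m. m < M \<Longrightarrow> cnj (fd $ m) * ga $ m \<noteq> 0 \<Longrightarrow>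
                     thetat m = - Arg (cnj (fd $ m) * ga $ m)"
  defines "A \<equiv> 1\<^sub>m NR + of_real (1 / s2) \<cdot>\<^sub>m (Hd * R * ctrans Hd)"
  defines "theta_opt \<equiv> - Arg (vh gd (R * ctrans Hd * minv A *\<^sub>v fa))"
  defines "Th_opt \<equiv> cis theta_opt \<cdot>\<^sub>m diag_phase M thetat"
  shows "(\<forall>phi. rate s2 R (Hch Hd fa fd ga gd (diag_phase M phi))
                 \<le> rate s2 R (Hch Hd fa fd ga gd Th_opt))
     \<and> cmod (vh fd (Th_opt *\<^sub>v ga)) = (\<Sum>m<M. cmod (cnj (fd $ m) * ga $ m))
     \<and> (\<forall>phi. cmod (vh fd (diag_phase M phi *\<^sub>v ga)) \<le> (\<Sum>m<M. cmod (cnj (fd $ m) * ga $ m)))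
     \<and> (\<forall>bd ba ph ps. bd \<ge> 0 \<and> ba \<ge> 0 \<and>
           fd = of_real bd \<cdot>\<^sub>v fbar M ph \<and> ga = of_real ba \<cdot>\<^sub>v fbar M ps \<longrightarrow>
           (\<Sum>m<M. cmod (cnj (fd $ m) * ga $ m)) = vnorm fd * vnorm ga
           \<and> (\<forall>Th \<in> sym_unitary M. rate s2 R (Hch Hd fa fd ga gd Th)
                 \<le> rate s2 R (Hch Hd fa fd ga gd Th_opt)))"
proof -
  define S where "S = (\<Sum>m<M. cmod (cnj (fd $ m) * ga $ m))"
  define \<alpha> where "\<alpha> = vh gd (R * ctrans Hd * minv (snr_mat (1 / s2) R Hd) *\<^sub>v fa)"
  have S: "S \<ge> 0" unfolding S_def by (simp add: sum_nonneg)
  have "vh fd (diag_phase M thetat *\<^sub>v ga) = of_real S"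
    unfolding S_def by (rule vh_diag_phase_aligned[OF fd ga]) (simp add: thetat)
  moreover have "A = snr_mat (1 / s2) R Hd" using Hd unfolding A_def snr_mat_def by simp
  ultimately have gain_opt: "vh fd (Th_opt *\<^sub>v ga) = cis (- Arg \<alpha>) * of_real S"
    unfolding Th_opt_def theta_opt_def \<alpha>_def by (simp add: vh_smult_mat_mult_vec[OF fd ga])
  hence cmod_opt: "cmod (vh fd (Th_opt *\<^sub>v ga)) = S" using S by (simp add: norm_mult)
  have Th_opt: "Th_opt \<in> carrier_mat M M" unfolding Th_opt_def by simp
  have optimal: "rate s2 R (Hch Hd fa fd ga gd Th) \<le> rate s2 R (Hch Hd fa fd ga gd Th_opt)"
    if "Th \<in> carrier_mat M M" "cmod (vh fd (Th *\<^sub>v ga)) \<le> S" for Th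
    unfolding Hch_eq_add_smult_outer[OF Hd fa fd ga gd that(1)]
      Hch_eq_add_smult_outer[OF Hd fa fd ga gd Th_opt]
      gain_opt \<alpha>_def
    by (rule rate_add_smult_outer_mono[OF Hd R s2 fa gd _ Re_cis_minus_Arg_aligned[OF S]])
      (use that cmod_opt in \<open>simp add: gain_opt \<alpha>_def\<close>)
  have diag_le: "cmod (vh fd (diag_phase M phi *\<^sub>v ga)) \<le> S" for phi
    unfolding S_def by (rule cmod_vh_diag_phase_le[OF fd ga])
  have "S = vnorm fd * vnorm ga \<and> (\<forall>Th \<in> sym_unitary M. rate s2 R (Hch Hd fa fd ga gd Th)
                 \<le> rate s2 R (Hch Hd fa fd ga gd Th_opt))"
    if "bd \<ge> 0" "ba \<ge> 0" "fd = of_real bd \<cdot>\<^sub>v fbar M ph" "ga = of_real ba \<cdot>\<^sub>v fbar M ps" for bd ba ph ps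
    using that l1_cnj_mult_fbar cmod_vh_unitary_le[OF fd ga] optimal
    by (auto simp: S_def sym_unitary_def)
  thus ?thesis using optimal diag_le cmod_opt unfolding S_def by auto
qed

end
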